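(* Let $N,M$ be positive integers, let $\mathscr{A}\subset\mathscr{M}(N,M)$ and $\mathscr{B}\subset\mathscr{M}(M,N)$ be finite sets of real matrices, and let $\|\cdot\|$ be a submultiplicative norm on $\mathscr{M}(N,N)$. Suppose that for every sequence $\{A_n\}_{n\ge1}$ with $A_n\in\mathscr{A}$ there exists a sequence $\{B_n\}_{n\ge1}$ with $B_n\in\mathscr{B}$ such that $\|A_nB_n\cdots A_1B_1\|\to0$ as $n\to\infty$. Then there exist constants $C>0$ and $\lambda\in(0,1)$ such that for every sequence $\{A_n\in\mathscr{A}\}$ there is a sequence $\{B_n\in\mathscr{B}\}$ for which \[ \|A_nB_n\cdots A_1B_1\|\le C\lambda^n,\qquad n=1,2,\ldots. \]
   Context: $\mathscr{M}(p,q)$ denotes the space of $p\times q$ real matrices with the topology of elementwise convergence. A norm on $\mathscr{M}(N,N)$ is submultiplicative if $\|XY\|\le\|X\|\,\|Y\|$ for all $X,Y$. *)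

theory Defs
  imports "HOL-Analysis.Analysis"
begin

definition submult_matrix_norm :: "(real^'n^'n \<Rightarrow> real) \<Rightarrow> bool" where
  "submult_matrix_norm nrm \<longleftrightarrow>
     (\<forall>X. 0 \<le> nrm X) \<and>
     (\<forall>X. nrm X = 0 \<longleftrightarrow> X = 0) \<and>
     (\<forall>c X. nrm (c *\<^sub>R X) = \<bar>c\<bar> * nrm X) \<and>
     (\<forall>X Y. nrm (X + Y) \<le> nrm X + nrm Y) \<and>
     (\<forall>X Y. nrm (X ** Y) \<le> nrm X * nrm Y)"

text \<open>prodAB As Bs n = A_n B_n ... A_1 B_1 (sequences indexed from 1; empty product = identity).\<close>
fun prodAB :: "(nat \<Rightarrow> real^'m^'n) \<Rightarrow> (nat \<Rightarrow> real^'n^'m) \<Rightarrow> nat \<Rightarrow> real^'n^'n" where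
  "prodAB As Bs 0 = mat 1"
| "prodAB As Bs (Suc n) = (As (Suc n) ** Bs (Suc n)) ** prodAB As Bs n"

end

theory Submission
  imports Defs
begin

text \<open>
  Compactness of \<open>\<A>\<^sup>\<nat>\<close> (a Koenig-type diagonal argument, \<open>\<A>\<close> being finite) makes the time
  of contraction uniform: there is a \<open>K\<close> such that every \<open>\<A>\<close>-sequence admits \<open>\<B>\<close>-choices
  and some \<open>j \<le> K\<close> with \<open>\<parallel>A\<^sub>jB\<^sub>j\<cdots>A\<^sub>1B\<^sub>1\<parallel> < 1/2\<close>. Cutting an arbitrary \<open>\<A>\<close>-sequence into
  consecutive such blocks, submultiplicativity halves the norm at the end of every block,
  i.e. at least once every \<open>K\<close> steps, while the products inside a block are bounded by
  \<open>\<parallel>I\<parallel> M\<^sup>K\<close> with \<open>M\<close> the largest norm of a product \<open>AB\<close>.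
\<close>

lemma prodAB_cong:
  assumes "\<And>i. 1 \<le> i \<Longrightarrow> i \<le> j \<Longrightarrow> As i = As' i \<and> Bs i = Bs' i"
  shows "prodAB As Bs j = prodAB As' Bs' j"
  using assms by (induction j) auto

lemma prodAB_add:
  "prodAB As Bs (s + j) = prodAB (\<lambda>n. As (s + n)) (\<lambda>n. Bs (s + n)) j ** prodAB As Bs s"
  by (induction j) (auto simp: matrix_mul_assoc)

lemma submult_matrix_norm_nonneg: "submult_matrix_norm nrm \<Longrightarrow> 0 \<le> nrm X"
  by (simp add: submult_matrix_norm_def)

lemma submult_matrix_norm_mult: "submult_matrix_norm nrm \<Longrightarrow> nrm (X ** Y) \<le> nrm X * nrm Y"
  by (simp add: submult_matrix_norm_def)

lemma submult_matrix_norm_mat_1: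
  fixes nrm :: "real^'n^'n \<Rightarrow> real"
  assumes nrm: "submult_matrix_norm nrm"
  shows "1 \<le> nrm (mat 1)"
proof -
  have "(mat 1 :: real^'n^'n) $ i $ i = 1" for i by (simp add: mat_def)
  then have "(mat 1 :: real^'n^'n) \<noteq> 0" by (metis zero_index zero_neq_one)
  then have "0 < nrm (mat 1)"
    using nrm by (simp add: submult_matrix_norm_def order_less_le)
  moreover have "nrm (mat 1) \<le> nrm (mat 1) * nrm (mat 1)"
    using submult_matrix_norm_mult[OF nrm, of "mat 1" "mat 1"] by simp
  ultimately show ?thesis by simp
qed

lemma norm_prodAB_le_power:
  assumes nrm: "submult_matrix_norm nrm" and M: "\<And>n. 1 \<le> n \<Longrightarrow> nrm (As n ** Bs n) \<le> M"
  shows "nrm (prodAB As Bs r) \<le> nrm (mat 1) * M ^ r"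
proof -
  have "0 \<le> M"
    using order_trans[OF submult_matrix_norm_nonneg[OF nrm] M[of 1]] by simp
  then show ?thesis
  proof (induction r)
    case (Suc r)
    have "nrm (prodAB As Bs (Suc r)) \<le> nrm (As (Suc r) ** Bs (Suc r)) * nrm (prodAB As Bs r)"
      using submult_matrix_norm_mult[OF nrm] by simp
    also have "\<dots> \<le> M * (nrm (mat 1) * M ^ r)"
      using M[of "Suc r"] Suc submult_matrix_norm_nonneg[OF nrm] by (intro mult_mono) auto
    finally show ?case by (simp add: algebra_simps)
  qed simp
qed

lemma infinitely_often_prefix_sequence:
  fixes w :: "nat \<Rightarrow> nat \<Rightarrow> 'a"
  assumes A: "finite A" and w: "\<And>L n. w L n \<in> A"
  shows "\<exists>v. (\<forall>n. v n \<in> A) \<and> (\<forall>j. infinite {L. \<forall>i\<le>j. w L i = v i})"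
proof -
  define P where "P j p \<longleftrightarrow> p \<in> range w \<and> infinite {L. \<forall>i\<le>j. w L i = p i}" for j p
  have column_finite: "finite ((\<lambda>L. w L n) ` S)" for n S
    using A w by (auto intro: finite_subset)
  have base: "\<exists>p. P 0 p"
  proof -
    obtain L0 where "infinite {L. w L 0 = w L0 0}"
      using pigeonhole_infinite[OF infinite_UNIV_nat column_finite] by auto
    then show ?thesis unfolding P_def by (intro exI[of _ "w L0"]) auto
  qed
  have step: "\<exists>q. P (Suc j) q \<and> (\<forall>i\<le>j. q i = p i)" if "P j p" for j p
  proof -
    let ?S = "{L. \<forall>i\<le>j. w L i = p i}"
    have "infinite ?S" using that unfolding P_def by blast
    from pigeonhole_infinite[OF this column_finite]
    obtain L1 where L1: "L1 \<in> ?S" and inf: "infinite {L \<in> ?S. w L (Suc j) = w L1 (Suc j)}"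
      by blast
    have "{L \<in> ?S. w L (Suc j) = w L1 (Suc j)} = {L. \<forall>i\<le>Suc j. w L i = w L1 i}"
      using L1 by (auto simp: le_Suc_eq)
    then show ?thesis using inf L1 unfolding P_def by (intro exI[of _ "w L1"]) auto
  qed
  obtain f where f: "\<And>j. P j (f j)" and f_ext: "\<And>j i. i \<le> j \<Longrightarrow> f (Suc j) i = f j i"
    using dependent_nat_choice[of P "\<lambda>j p q. \<forall>i\<le>j. q i = p i", OF base step] by blast
  define v where "v i = f i i" for i
  have f_stable: "f j i = v i" if "i \<le> j" for i j
    using that unfolding v_def by (induction j rule: dec_induct) (auto simp: f_ext)
  have "v n \<in> A" for n
    using f[of n] w unfolding P_def v_def by auto
  moreover have "infinite {L. \<forall>i\<le>j. w L i = v i}" for j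
  proof -
    have "{L. \<forall>i\<le>j. w L i = f j i} = {L. \<forall>i\<le>j. w L i = v i}"
      using f_stable by auto
    then show ?thesis using f[of j] unfolding P_def by simp
  qed
  ultimately show ?thesis by blast
qed

lemma uniform_contraction_time:
  fixes \<A> :: "(real^'m^'n) set" and \<B> :: "(real^'n^'m) set"
    and nrm :: "real^'n^'n \<Rightarrow> real"
  assumes A: "finite \<A>" and e: "0 < e"
    and stab: "\<forall>As. (\<forall>n\<ge>1. As n \<in> \<A>) \<longrightarrow>
           (\<exists>Bs. (\<forall>n\<ge>1. Bs n \<in> \<B>) \<and> (\<lambda>n. nrm (prodAB As Bs n)) \<longlonglongrightarrow> 0)"
  shows "\<exists>K\<ge>1. \<forall>As. (\<forall>n\<ge>1. As n \<in> \<A>) \<longrightarrow>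
           (\<exists>Bs j. (\<forall>n\<ge>1. Bs n \<in> \<B>) \<and> 1 \<le> j \<and> j \<le> K \<and> nrm (prodAB As Bs j) < e)"
    (is "\<exists>K\<ge>1. ?uniform K")
proof -
  have "\<exists>K. ?uniform K"
  proof (rule ccontr)
    assume "\<nexists>K. ?uniform K"
    then have "\<forall>K. \<exists>As. (\<forall>n\<ge>1. As n \<in> \<A>) \<and>
        \<not> (\<exists>Bs j. (\<forall>n\<ge>1. Bs n \<in> \<B>) \<and> 1 \<le> j \<and> j \<le> K \<and> nrm (prodAB As Bs j) < e)"
      by blast
    from choice[OF this] obtain w where w: "\<forall>K. (\<forall>n\<ge>1. w K n \<in> \<A>) \<and>
        \<not> (\<exists>Bs j. (\<forall>n\<ge>1. Bs n \<in> \<B>) \<and> 1 \<le> j \<and> j \<le> K \<and> nrm (prodAB (w K) Bs j) < e)"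
      by blast
    obtain v where v_in: "\<forall>n. v n \<in> \<A>"
      and v_prefix: "\<forall>j. infinite {L. \<forall>i\<le>j. w L (Suc i) = v i}"
      using infinitely_often_prefix_sequence[OF A, of "\<lambda>L n. w L (Suc n)"] w by auto
    define As where "As n = v (n - 1)" for n
      \<comment> \<open>\<open>v\<close> is indexed from 0, the sequences multiplied by \<open>prodAB\<close> from 1\<close>
    have "\<forall>n\<ge>1. As n \<in> \<A>"
      using v_in by (simp add: As_def)
    then obtain Bs where Bs: "\<forall>n\<ge>1. Bs n \<in> \<B>" and lim: "(\<lambda>n. nrm (prodAB As Bs n)) \<longlonglongrightarrow> 0"
      using stab by blast
    obtain N where N: "\<And>n. N \<le> n \<Longrightarrow> nrm (prodAB As Bs n) < e"
      using order_tendstoD(2)[OF lim e] unfolding eventually_sequentially by blast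
    obtain L where L: "Suc N \<le> L" and agree: "\<forall>i\<le>Suc N. w L (Suc i) = v i"
      using v_prefix[rule_format, of "Suc N"] unfolding infinite_nat_iff_unbounded_le by blast
    have "w L i = As i" if "1 \<le> i" "i \<le> Suc N" for i
      using agree[rule_format, of "i - 1"] that by (simp add: As_def)
    then have same: "prodAB (w L) Bs (Suc N) = prodAB As Bs (Suc N)"
      by (intro prodAB_cong) auto
    have "\<not> (\<exists>Bs j. (\<forall>n\<ge>1. Bs n \<in> \<B>) \<and> 1 \<le> j \<and> j \<le> L \<and> nrm (prodAB (w L) Bs j) < e)"
      using w by blast
    moreover have "1 \<le> Suc N" by simp
    ultimately have "\<not> nrm (prodAB (w L) Bs (Suc N)) < e"
      using Bs L by blast
    then show False
      using N[of "Suc N"] same by simp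
  qed
  then obtain K where K: "?uniform K" ..
  show ?thesis
  proof (intro exI[of _ "max K 1"] conjI allI impI)
    fix As :: "nat \<Rightarrow> real^'m^'n" assume "\<forall>n\<ge>1. As n \<in> \<A>"
    then obtain Bs j where "\<forall>n\<ge>1. Bs n \<in> \<B>" "1 \<le> j" "j \<le> K" "nrm (prodAB As Bs j) < e"
      using K by blast
    then show "\<exists>Bs j. (\<forall>n\<ge>1. Bs n \<in> \<B>) \<and> 1 \<le> j \<and> j \<le> max K 1 \<and> nrm (prodAB As Bs j) < e"
      by (intro exI[of _ Bs] exI[of _ j]) auto
  qed simp
qed

lemma strict_mono_interval:
  fixes pos :: "nat \<Rightarrow> nat"
  assumes mono: "strict_mono pos" and pos_0: "pos 0 = 0"
  shows "\<exists>m. pos m \<le> n \<and> n < pos (Suc m)"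
proof (induction n)
  case 0
  show ?case using strict_monoD[OF mono, of 0 1] pos_0 by auto
next
  case (Suc n)
  then obtain m where m: "pos m \<le> n" "n < pos (Suc m)" by blast
  show ?case
  proof (cases "Suc n < pos (Suc m)")
    case True
    then show ?thesis using m by (intro exI[of _ m]) auto
  next
    case False
    then have "Suc n = pos (Suc m)" using m by auto
    then show ?thesis using strict_monoD[OF mono, of "Suc m" "Suc (Suc m)"] by (intro exI[of _ "Suc m"]) auto
  qed
qed

lemma strict_mono_interval_unique:
  fixes pos :: "nat \<Rightarrow> nat"
  assumes mono: "strict_mono pos"
    and "pos m < n" "n \<le> pos (Suc m)" and "pos m' < n" "n \<le> pos (Suc m')"
  shows "m = m'"
proof (rule ccontr)
  assume "m \<noteq> m'"
  then have "Suc m \<le> m' \<or> Suc m' \<le> m" by auto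
  then have "pos (Suc m) \<le> pos m' \<or> pos (Suc m') \<le> pos m"
    using strict_mono_less_eq[OF mono] by blast
  then show False using assms(2-5) by linarith
qed

lemma glue_blocks:
  fixes pos :: "nat \<Rightarrow> nat" and F :: "nat \<Rightarrow> nat \<Rightarrow> 'a"
  assumes mono: "strict_mono pos"
  shows "\<exists>Bs. \<forall>m i. 0 < i \<longrightarrow> pos m + i \<le> pos (Suc m) \<longrightarrow> Bs (pos m + i) = F m i"
proof -
  have "\<exists>b. \<forall>m i. 0 < i \<longrightarrow> pos m + i \<le> pos (Suc m) \<longrightarrow> pos m + i = n \<longrightarrow> b = F m i" for n
  proof (cases "\<exists>m i. 0 < i \<and> pos m + i \<le> pos (Suc m) \<and> pos m + i = n")
    case True
    then obtain m i where mi: "0 < i" "pos m + i \<le> pos (Suc m)" "pos m + i = n" by blast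
    show ?thesis
    proof (intro exI[of _ "F m i"] allI impI)
      fix m' i' assume mi': "0 < i'" "pos m' + i' \<le> pos (Suc m')" "pos m' + i' = n"
      then have "m = m'"
        using strict_mono_interval_unique[OF mono, of m n m'] mi by linarith
      then show "F m i = F m' i'" using mi mi' by (metis add_left_cancel)
    qed
  qed auto
  then obtain Bs where "\<forall>n m i. 0 < i \<longrightarrow> pos m + i \<le> pos (Suc m) \<longrightarrow> pos m + i = n \<longrightarrow> Bs n = F m i"
    using choice[of "\<lambda>n b. \<forall>m i. 0 < i \<longrightarrow> pos m + i \<le> pos (Suc m) \<longrightarrow> pos m + i = n \<longrightarrow> b = F m i"]
    by blast
  then show ?thesis by blast
qed

lemma contracting_block_decomposition:
  fixes \<A> :: "(real^'m^'n) set" and \<B> :: "(real^'n^'m) set"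
    and nrm :: "real^'n^'n \<Rightarrow> real" and As :: "nat \<Rightarrow> real^'m^'n"
  assumes blocks: "\<forall>As. (\<forall>n\<ge>1. As n \<in> \<A>) \<longrightarrow>
           (\<exists>Bs j. (\<forall>n\<ge>1. Bs n \<in> \<B>) \<and> 1 \<le> j \<and> j \<le> K \<and> nrm (prodAB As Bs j) < e)"
    and As: "\<forall>n\<ge>1. As n \<in> \<A>"
  shows "\<exists>Bs pos. (\<forall>n\<ge>1. Bs n \<in> \<B>) \<and> strict_mono pos \<and> pos 0 = 0 \<and>
           (\<forall>m. pos (Suc m) \<le> pos m + K \<and>
                nrm (prodAB (\<lambda>n. As (pos m + n)) (\<lambda>n. Bs (pos m + n)) (pos (Suc m) - pos m)) < e)"
proof -
  obtain Bsel J where sel: "\<And>As. \<forall>n\<ge>1. As n \<in> \<A> \<Longrightarrow> (\<forall>n\<ge>1. Bsel As n \<in> \<B>) \<and>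
      1 \<le> J As \<and> J As \<le> K \<and> nrm (prodAB As (Bsel As) (J As)) < e"
    using blocks by metis
  define tail where "tail p n = As (p + n)" for p n
  have "\<forall>n\<ge>1. tail p n \<in> \<A>" for p
    using As by (simp add: tail_def)
  note sel_tail = sel[OF this]
  define pos where "pos = rec_nat 0 (\<lambda>_ p. p + J (tail p))"
  have pos_0: "pos 0 = 0" and pos_Suc: "pos (Suc m) = pos m + J (tail (pos m))" for m
    by (simp_all add: pos_def)
  have "0 < J (tail p)" for p
    using sel_tail[of p] by simp
  then have mono: "strict_mono pos"
    unfolding strict_mono_Suc_iff by (simp add: pos_Suc)
  obtain Bs where Bs: "\<And>m i. 0 < i \<Longrightarrow> pos m + i \<le> pos (Suc m) \<Longrightarrow> Bs (pos m + i) = Bsel (tail (pos m)) i"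
    using glue_blocks[OF mono, of "\<lambda>m. Bsel (tail (pos m))"] by blast
  have "Bs n \<in> \<B>" if "1 \<le> n" for n
  proof -
    obtain m where m: "pos m \<le> n - 1" "n - 1 < pos (Suc m)"
      using strict_mono_interval[OF mono pos_0] by blast
    then have "Bs n = Bsel (tail (pos m)) (n - pos m)"
      using Bs[of "n - pos m" m] that by simp
    then show ?thesis using sel_tail[of "pos m"] m that by simp
  qed
  moreover have "nrm (prodAB (\<lambda>n. As (pos m + n)) (\<lambda>n. Bs (pos m + n)) (pos (Suc m) - pos m)) < e" for m
  proof -
    have "prodAB (\<lambda>n. As (pos m + n)) (\<lambda>n. Bs (pos m + n)) (J (tail (pos m))) =
          prodAB (tail (pos m)) (Bsel (tail (pos m))) (J (tail (pos m)))"
      by (rule prodAB_cong) (simp add: tail_def Bs pos_Suc)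
    then show ?thesis using sel_tail[of "pos m"] by (simp add: pos_Suc)
  qed
  moreover have "pos (Suc m) \<le> pos m + K" for m
    using sel_tail[of "pos m"] by (simp add: pos_Suc)
  ultimately show ?thesis using mono pos_0 by blast
qed

lemma norm_prodAB_at_block_ends:
  fixes nrm :: "real^'n^'n \<Rightarrow> real"
  assumes nrm: "submult_matrix_norm nrm"
    and mono: "mono pos" and pos_0: "pos 0 = 0"
    and contract: "\<And>m. nrm (prodAB (\<lambda>n. As (pos m + n)) (\<lambda>n. Bs (pos m + n)) (pos (Suc m) - pos m)) \<le> q"
  shows "nrm (prodAB As Bs (pos m)) \<le> nrm (mat 1) * q ^ m"
proof (induction m)
  case (Suc m)
  have "pos (Suc m) = pos m + (pos (Suc m) - pos m)"
    using monoD[OF mono, of m "Suc m"] by simp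
  then have "nrm (prodAB As Bs (pos (Suc m))) \<le>
      nrm (prodAB (\<lambda>n. As (pos m + n)) (\<lambda>n. Bs (pos m + n)) (pos (Suc m) - pos m)) * nrm (prodAB As Bs (pos m))"
    by (metis prodAB_add submult_matrix_norm_mult[OF nrm])
  also have "\<dots> \<le> q * (nrm (mat 1) * q ^ m)"
    using contract[of m] Suc submult_matrix_norm_nonneg[OF nrm, of "prodAB As Bs (pos m)"]
      order_trans[OF submult_matrix_norm_nonneg[OF nrm] contract[of m]]
    by (intro mult_mono) auto
  finally show ?case by (simp add: algebra_simps)
qed (simp add: pos_0)

lemma norm_prodAB_geometric_decay:
  fixes nrm :: "real^'n^'n \<Rightarrow> real" and As :: "nat \<Rightarrow> real^'m^'n"
  assumes nrm: "submult_matrix_norm nrm"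
    and M: "1 \<le> M" "\<And>n. 1 \<le> n \<Longrightarrow> nrm (As n ** Bs n) \<le> M"
    and mono: "strict_mono pos" and pos_0: "pos 0 = 0" and gap: "\<And>m. pos (Suc m) \<le> pos m + K"
    and contract: "\<And>m. nrm (prodAB (\<lambda>n. As (pos m + n)) (\<lambda>n. Bs (pos m + n)) (pos (Suc m) - pos m)) \<le> 1/2"
  shows "nrm (prodAB As Bs n) \<le> 2 * nrm (mat 1)^2 * M^K * root K (1/2) ^ n"
proof -
  define c where "c = nrm (mat 1)"
  define lam where "lam = root K (1/2)"
  have c: "1 \<le> c" unfolding c_def by (rule submult_matrix_norm_mat_1[OF nrm])
  have "0 < K" using strict_monoD[OF mono, of 0 1] gap[of 0] pos_0 by simp
  then have lam: "0 < lam" "lam < 1" "lam ^ K = 1/2"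
    unfolding lam_def by (simp_all add: real_root_pow_pos)
  have pos_le: "pos m \<le> m * K" for m
  proof (induction m)
    case (Suc m)
    then show ?case using gap[of m] by simp
  qed (simp add: pos_0)
  obtain m where m: "pos m \<le> n" "n < pos (Suc m)"
    using strict_mono_interval[OF mono pos_0] by blast
  define r where "r = n - pos m"
  have "r \<le> K" using m gap[of m] unfolding r_def by linarith
  have "nrm (prodAB As Bs n) \<le>
      nrm (prodAB (\<lambda>k. As (pos m + k)) (\<lambda>k. Bs (pos m + k)) r) * nrm (prodAB As Bs (pos m))"
    using prodAB_add[of As Bs "pos m" r] submult_matrix_norm_mult[OF nrm] m by (simp add: r_def)
  also have "\<dots> \<le> (c * M ^ K) * (c * (1/2) ^ m)"
  proof (rule mult_mono)
    have "nrm (prodAB (\<lambda>k. As (pos m + k)) (\<lambda>k. Bs (pos m + k)) r) \<le> c * M ^ r"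
      unfolding c_def by (rule norm_prodAB_le_power[OF nrm]) (simp add: M)
    also have "\<dots> \<le> c * M ^ K"
      using c M(1) \<open>r \<le> K\<close> by (intro mult_left_mono power_increasing) auto
    finally show "nrm (prodAB (\<lambda>k. As (pos m + k)) (\<lambda>k. Bs (pos m + k)) r) \<le> c * M ^ K" .
    show "nrm (prodAB As Bs (pos m)) \<le> c * (1/2) ^ m"
      unfolding c_def using norm_prodAB_at_block_ends[OF nrm strict_mono_mono[OF mono] pos_0 contract] .
  qed (use c M(1) submult_matrix_norm_nonneg[OF nrm] in auto)
  also have "\<dots> = 2 * c^2 * M^K * lam ^ (K * Suc m)"
  proof -
    have "lam ^ (K * Suc m) = (1/2) ^ Suc m" by (simp only: power_mult lam(3))
    then show ?thesis by (simp add: power2_eq_square)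
  qed
  also have "\<dots> \<le> 2 * c^2 * M^K * lam ^ n"
  proof -
    have "n \<le> K * Suc m" using m pos_le[of "Suc m"] by (simp add: mult.commute)
    then show ?thesis using lam c M(1) by (intro mult_left_mono power_decreasing) auto
  qed
  finally show ?thesis unfolding c_def lam_def .
qed

theorem theorem1:
  fixes \<A> :: "(real^'m^'n) set" and \<B> :: "(real^'n^'m) set"
    and nrm :: "real^'n^'n \<Rightarrow> real"
  assumes "finite \<A>" and "finite \<B>"
    and "submult_matrix_norm nrm"
    and "\<forall>As. (\<forall>n\<ge>1. As n \<in> \<A>) \<longrightarrow>
           (\<exists>Bs. (\<forall>n\<ge>1. Bs n \<in> \<B>) \<and> (\<lambda>n. nrm (prodAB As Bs n)) \<longlonglongrightarrow> 0)"
  shows "\<exists>C lam. C > 0 \<and> 0 < lam \<and> lam < 1 \<and>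
           (\<forall>As. (\<forall>n\<ge>1. As n \<in> \<A>) \<longrightarrow>
              (\<exists>Bs. (\<forall>n\<ge>1. Bs n \<in> \<B>) \<and>
                 (\<forall>n\<ge>1. nrm (prodAB As Bs n) \<le> C * lam ^ n)))"
proof -
  obtain K where "1 \<le> K" and blocks: "\<forall>As. (\<forall>n\<ge>1. As n \<in> \<A>) \<longrightarrow>
      (\<exists>Bs j. (\<forall>n\<ge>1. Bs n \<in> \<B>) \<and> 1 \<le> j \<and> j \<le> K \<and> nrm (prodAB As Bs j) < 1/2)"
    using uniform_contraction_time[OF assms(1) _ assms(4), of "1/2"] by auto
  define M where "M = Max (insert 1 ((\<lambda>(a, b). nrm (a ** b)) ` (\<A> \<times> \<B>)))"
  have M: "1 \<le> M" "\<And>a b. a \<in> \<A> \<Longrightarrow> b \<in> \<B> \<Longrightarrow> nrm (a ** b) \<le> M"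
    unfolding M_def using assms(1,2) by (auto intro: Max_ge)
  define C where "C = 2 * nrm (mat 1)^2 * M^K"
  define lam where "lam = root K (1/2)"
  show ?thesis
  proof (rule exI[of _ C], rule exI[of _ lam], intro conjI allI impI)
    show "0 < C"
      unfolding C_def using submult_matrix_norm_mat_1[OF assms(3)] M(1) by simp
    show "0 < lam" "lam < 1" unfolding lam_def using \<open>1 \<le> K\<close> by simp_all
    fix As :: "nat \<Rightarrow> real^'m^'n" assume As: "\<forall>n\<ge>1. As n \<in> \<A>"
    from contracting_block_decomposition[OF blocks As]
    obtain Bs pos where Bs: "\<forall>n\<ge>1. Bs n \<in> \<B>" and pos: "strict_mono pos" "pos 0 = 0"
      and blocks_As: "\<forall>m. pos (Suc m) \<le> pos m + K \<and>
             nrm (prodAB (\<lambda>n. As (pos m + n)) (\<lambda>n. Bs (pos m + n)) (pos (Suc m) - pos m)) < 1/2"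
      by blast
    have "nrm (As n ** Bs n) \<le> M" if "1 \<le> n" for n
      using M(2)[of "As n" "Bs n"] As Bs that by simp
    from norm_prodAB_geometric_decay[OF assms(3) M(1) this pos]
    have "nrm (prodAB As Bs n) \<le> C * lam ^ n" for n
      unfolding C_def lam_def using blocks_As by (simp add: less_imp_le)
    with Bs show "\<exists>Bs. (\<forall>n\<ge>1. Bs n \<in> \<B>) \<and> (\<forall>n\<ge>1. nrm (prodAB As Bs n) \<le> C * lam ^ n)"
      by blast
  qed
qed

end
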